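(* Let $\mathcal A_+,\mathcal A_-\subseteq\mathbb Z^n$ be disjoint finite sets such that $(\mathcal A_+,\mathcal A_-)$ is full dimensional and nonseparable, with critical system $F$. Let $\mathcal A=\mathcal A_+\cup\mathcal A_-$, $c\in\mathbb R^{\mathcal A}_{>0}$, and $h:\mathcal A\to\mathbb Z$ a height function lifting $\mathcal A_-$, and set $G(t,x):=F(c\star t^h,x)$ for $(t,x)\in\mathbb R^{n+1}_{>0}$. If $G(t,x)=0$ for some $(t,x)\in\mathbb R^{n+1}_{>0}$, then the Jacobian matrix $J_G(t,x)$ (with respect to $(t,x)$) satisfies $\det J_G(t,x)\neq0$. In particular, for $f\in\mathcal S(\mathcal A_+,\mathcal A_-)$ with nonsigned coefficients $c$, the unique element $t_*$ of $S=\{t>0:G(t,x)=0\text{ for some }x\in\mathbb R^n_{>0}\}$ together with the corresponding $x$ is a nonsingular solution of $G=0$.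
   Context: For $c\in\mathbb R^{\mathcal A}_{>0}$ let $f_c(x)=\sum_{a\in\mathcal A_+}c_ax^a-\sum_{b\in\mathcal A_-}c_bx^b$; $\mathcal S(\mathcal A_+,\mathcal A_-)$ is the set of these. The critical system is $F(c,x)=(f_c(x),x_1\partial_{x_1}f_c(x),\dots,x_n\partial_{x_n}f_c(x))$. Full dimensional: $\dim\operatorname{conv}(\mathcal A)=n$. $\mathcal F(\mathcal A_+)$ is the common refinement of all regular polyhedral subdivisions of $\mathcal A_+$, $\mathcal F_n(\mathcal A_+)$ its $n$-cells; $(\mathcal A_+,\mathcal A_-)$ is nonseparable if $\mathcal A_-\subseteq\operatorname{relint}\operatorname{conv}(\mathcal A_+)$ and some $D\in\mathcal F_n(\mathcal A_+)$ contains $\mathcal A_-$. A height function $h$ lifts $\mathcal A_-$ if $h(a)>0$ for $a\in\mathcal A_-$ and $h(a)=0$ for $a\in\mathcal A_+$; $c\star t^h=(c_at^{h(a)})_a$. (For nonempty $\mathcal A_-$ under these hypotheses, $S$ is known to be a singleton.) *)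

theory Defs
  imports "HOL-Analysis.Analysis"
begin

text \<open>Exponent vectors are points of real^'n with integer coordinates; n = CARD('n).\<close>

definition int_points :: "(real^'n) set \<Rightarrow> bool" where
  "int_points A \<longleftrightarrow> (\<forall>a\<in>A. \<forall>i. a $ i \<in> \<int>)"

definition monom :: "real^'n \<Rightarrow> real^'n \<Rightarrow> real" where
  "monom x a = (\<Prod>i\<in>UNIV. (x $ i) powr (a $ i))"

definition fsig :: "(real^'n) set \<Rightarrow> (real^'n) set \<Rightarrow> (real^'n \<Rightarrow> real) \<Rightarrow> real^'n \<Rightarrow> real" where
  "fsig Ap Am c x = (\<Sum>a\<in>Ap. c a * monom x a) - (\<Sum>b\<in>Am. c b * monom x b)"

definition partial :: "(real^'m \<Rightarrow> real) \<Rightarrow> 'm \<Rightarrow> real^'m \<Rightarrow> real" where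
  "partial f i x = deriv (\<lambda>s. f (\<chi> j. if j = i then s else x $ j)) (x $ i)"

text \<open>Critical system F(c,x) = (f_c(x), x_1 d_1 f_c(x), ..., x_n d_n f_c(x));
  index None is the component f_c, index Some i is x_i d_i f_c.\<close>
definition crit_sys :: "(real^'n) set \<Rightarrow> (real^'n) set \<Rightarrow> (real^'n \<Rightarrow> real) \<Rightarrow> real^'n \<Rightarrow> real^('n option)" where
  "crit_sys Ap Am c x = (\<chi> k. case k of None \<Rightarrow> fsig Ap Am c x
                              | Some i \<Rightarrow> x $ i * partial (fsig Ap Am c) i x)"

definition full_dimensional :: "(real^'n) set \<Rightarrow> (real^'n) set \<Rightarrow> bool" where
  "full_dimensional Ap Am \<longleftrightarrow> aff_dim (convex hull (Ap \<union> Am)) = int CARD('n)"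

text \<open>Regular polyhedral subdivision of a point configuration A induced by a height w:
  its cells are convex hulls of the lower faces of the lifted configuration, i.e. of the
  sets of points minimising w(a) + u.a for some u.\<close>
definition lower_face :: "(real^'n) set \<Rightarrow> (real^'n \<Rightarrow> real) \<Rightarrow> real^'n \<Rightarrow> (real^'n) set" where
  "lower_face A w u = {a\<in>A. \<forall>b\<in>A. w a + u \<bullet> a \<le> w b + u \<bullet> b}"

definition reg_subdiv_ncells :: "(real^'n) set \<Rightarrow> (real^'n \<Rightarrow> real) \<Rightarrow> (real^'n) set set" where
  "reg_subdiv_ncells A w =
     {convex hull (lower_face A w u) | u. aff_dim (convex hull (lower_face A w u)) = int CARD('n)}"

text \<open>n-cells of the common refinement F(A) of all regular polyhedral subdivisions of A:
  the n-dimensional intersections of one n-cell from each regular subdivision.\<close>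
definition refinement_ncells :: "(real^'n) set \<Rightarrow> (real^'n) set set" where
  "refinement_ncells A =
     {D. \<exists>C. (\<forall>w. C w \<in> reg_subdiv_ncells A w) \<and> D = (\<Inter>w. C w)
            \<and> aff_dim D = int CARD('n)}"

definition nonseparable :: "(real^'n) set \<Rightarrow> (real^'n) set \<Rightarrow> bool" where
  "nonseparable Ap Am \<longleftrightarrow> Am \<subseteq> rel_interior (convex hull Ap)
      \<and> (\<exists>D\<in>refinement_ncells Ap. Am \<subseteq> D)"

definition lifts :: "(real^'n) set \<Rightarrow> (real^'n) set \<Rightarrow> (real^'n \<Rightarrow> int) \<Rightarrow> bool" where
  "lifts Ap Am h \<longleftrightarrow> (\<forall>a\<in>Am. h a > 0) \<and> (\<forall>a\<in>Ap. h a = 0)"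

text \<open>G(t,x) = F(c * t^h, x); a point p of R^{n+1} has t = p$None and x_i = p$(Some i).\<close>
definition Gsys :: "(real^'n) set \<Rightarrow> (real^'n) set \<Rightarrow> (real^'n \<Rightarrow> real) \<Rightarrow> (real^'n \<Rightarrow> int)
     \<Rightarrow> real^('n option) \<Rightarrow> real^('n option)" where
  "Gsys Ap Am c h p = crit_sys Ap Am (\<lambda>a. c a * (p $ None) powi (h a)) (\<chi> i. p $ Some i)"

definition jacobian_mat :: "(real^'m \<Rightarrow> real^'m) \<Rightarrow> real^'m \<Rightarrow> real^'m^'m" where
  "jacobian_mat G p = (\<chi> k l. partial (\<lambda>q. G q $ k) l p)"

end

theory Submission
  imports Defs
begin

(*
  At a positive zero (t, x) of G put K_a = c_a t^h(a) x^a > 0.  The equations f = 0 and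
  x_i d_i f = 0 say that these weights balance: sum_{A+} K_a = sum_{A-} K_b and
  sum_{A+} K_a a = sum_{A-} K_b b.  The first row of J_G, the gradient of f in (t, x), is
  therefore (d_t f, 0, ..., 0), and d_t f < 0 because h vanishes on A+ and is positive on A-.
  The remaining block is the log-Hessian (x_i d_i x_j d_j f) with columns scaled by 1/x_j;
  its quadratic form is Q(u) = sum_{A+} K_a (u.a)^2 - sum_{A-} K_b (u.b)^2.

  Nonseparability makes Q positive definite.  The height (u.a)^2 induces a regular subdivision
  of A+ having a cell that contains A-; this cell is the hull of a lower face, so some
  phi(y) = (u.y)^2 + v.y is >= kappa on A+ and, being convex, <= kappa on A-.  By the balance,
  Q(u) = sum_{A+} K_a (phi(a) - kappa) + sum_{A-} K_b (kappa - phi(b)) >= 0, and equality would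
  make phi attain its maximum over conv A+ at a point of A-, which is interior; this is
  impossible for the strictly convex direction u of phi unless u = 0.
*)

section \<open>Bordered determinants\<close>

lemma det_nonzero_if_ker_trivial:
  fixes A :: "real^'m^'m"
  assumes "\<And>v. A *v v = 0 \<Longrightarrow> v = 0"
  shows "det A \<noteq> 0"
  using assms matrix_left_invertible_ker invertible_left_inverse invertible_det_nz by metis

lemma sum_UNIV_option:
  fixes f :: "'a::finite option \<Rightarrow> 'b::comm_monoid_add"
  shows "(\<Sum>k\<in>UNIV. f k) = f None + (\<Sum>j\<in>UNIV. f (Some j))"
  unfolding UNIV_option_conv by (simp add: sum.reindex)

lemma det_bordered_nonzero:
  fixes J :: "real^('m::finite option)^('m option)"
  assumes row: "\<And>j. J $ None $ Some j = 0" and corner: "J $ None $ None \<noteq> 0"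
    and block: "\<And>w. (\<chi> i. \<Sum>j\<in>UNIV. J $ Some i $ Some j * w $ j) = 0 \<Longrightarrow> w = 0"
  shows "det J \<noteq> 0"
proof (rule det_nonzero_if_ker_trivial)
  fix v assume v: "J *v v = 0"
  have "J $ None $ None * v $ None = (J *v v) $ None"
    by (simp add: matrix_vector_mult_def sum_UNIV_option row)
  then have v_None: "v $ None = 0"
    using v corner by simp
  have "(\<chi> i. \<Sum>j\<in>UNIV. J $ Some i $ Some j * (\<chi> j. v $ Some j) $ j) = 0"
    using v v_None by (simp add: vec_eq_iff matrix_vector_mult_def sum_UNIV_option)
  then have "(\<chi> j. v $ Some j) = 0"
    by (rule block)
  then show "v = 0"
    using v_None by (simp add: vec_eq_iff) (metis option.exhaust)
qed

section \<open>Convex geometry of nonseparable configurations\<close>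

lemma convex_on_inner_square_plus_linear:
  fixes u v :: "'a::real_inner"
  assumes "convex S"
  shows "convex_on S (\<lambda>y. (u \<bullet> y)\<^sup>2 + v \<bullet> y)"
proof (rule convex_onI[OF _ assms])
  fix t :: real and y z assume t: "0 < t" "t < 1"
  have "(1 - t) * (u \<bullet> y)\<^sup>2 + t * (u \<bullet> z)\<^sup>2 - ((1 - t) * (u \<bullet> y) + t * (u \<bullet> z))\<^sup>2
          = t * (1 - t) * (u \<bullet> y - u \<bullet> z)\<^sup>2"
    by (simp add: algebra_simps power2_eq_square)
  also have "\<dots> \<ge> 0" using t by simp
  finally show "(u \<bullet> ((1 - t) *\<^sub>R y + t *\<^sub>R z))\<^sup>2 + v \<bullet> ((1 - t) *\<^sub>R y + t *\<^sub>R z)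
      \<le> (1 - t) * ((u \<bullet> y)\<^sup>2 + v \<bullet> y) + t * ((u \<bullet> z)\<^sup>2 + v \<bullet> z)"
    by (simp add: algebra_simps)
qed

lemma inner_square_plus_linear_no_interior_max:
  fixes u v b :: "'a::real_inner"
  assumes "b \<in> interior S" and "\<forall>y\<in>S. (u \<bullet> y)\<^sup>2 + v \<bullet> y \<le> (u \<bullet> b)\<^sup>2 + v \<bullet> b"
  shows "u = 0"
proof (rule ccontr)
  assume "u \<noteq> 0"
  define \<phi> where "\<phi> y = (u \<bullet> y)\<^sup>2 + v \<bullet> y" for y
  obtain e where e: "e > 0" "ball b e \<subseteq> S"
    using assms(1) mem_interior by blast
  define d where "d = e / (2 * norm u)"
  have "d > 0" "norm (d *\<^sub>R u) < e"
    using e \<open>u \<noteq> 0\<close> by (simp_all add: d_def)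
  then have "b + d *\<^sub>R u \<in> S" "b - d *\<^sub>R u \<in> S"
    using e(2) by (auto simp: dist_norm)
  then have "\<phi> (b + d *\<^sub>R u) \<le> \<phi> b" "\<phi> (b - d *\<^sub>R u) \<le> \<phi> b"
    using assms(2) by (simp_all add: \<phi>_def)
  moreover have "\<phi> (b + d *\<^sub>R u) + \<phi> (b - d *\<^sub>R u) = 2 * \<phi> b + 2 * (d * (u \<bullet> u))\<^sup>2"
    by (simp add: \<phi>_def algebra_simps power2_eq_square)
  moreover have "(d * (u \<bullet> u))\<^sup>2 > 0"
    using \<open>d > 0\<close> \<open>u \<noteq> 0\<close> by simp
  ultimately show False
    by linarith
qed

lemma nonseparable_supporting_quadric:
  fixes Ap Am :: "(real^'n) set" and u :: "real^'n"
  assumes "nonseparable Ap Am"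
  obtains v \<kappa> where "\<forall>a\<in>Ap. \<kappa> \<le> (u \<bullet> a)\<^sup>2 + v \<bullet> a" and "\<forall>b\<in>Am. (u \<bullet> b)\<^sup>2 + v \<bullet> b \<le> \<kappa>"
proof -
  define w where "w a = (u \<bullet> a)\<^sup>2" for a :: "real^'n"
  obtain D where "D \<in> refinement_ncells Ap" "Am \<subseteq> D"
    using assms unfolding nonseparable_def by blast
  then obtain C where "C w \<in> reg_subdiv_ncells Ap w" "Am \<subseteq> C w"
    unfolding refinement_ncells_def by blast
  then obtain v where "Am \<subseteq> convex hull (lower_face Ap w v)"
    and "aff_dim (convex hull (lower_face Ap w v)) = int CARD('n)"
    unfolding reg_subdiv_ncells_def by blast
  moreover from this(2) obtain a0 where "a0 \<in> lower_face Ap w v"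
    using aff_dim_empty by fastforce
  define \<kappa> where "\<kappa> = w a0 + v \<bullet> a0"
  have "\<forall>a\<in>Ap. \<kappa> \<le> w a + v \<bullet> a" and "\<forall>a\<in>lower_face Ap w v. w a + v \<bullet> a \<le> \<kappa>"
    using \<open>a0 \<in> lower_face Ap w v\<close> by (auto simp: \<kappa>_def lower_face_def)
  moreover have "convex_on (convex hull (lower_face Ap w v)) (\<lambda>y. w y + v \<bullet> y)"
    unfolding w_def by (intro convex_on_inner_square_plus_linear convex_convex_hull)
  ultimately show thesis
    using that convex_on_convex_hull_bound unfolding w_def by blast
qed

lemma nonseparable_full_dimensional_interior:
  fixes Ap Am :: "(real^'n) set"
  assumes "full_dimensional Ap Am" and "nonseparable Ap Am"
  shows "Am \<subseteq> interior (convex hull Ap)"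
proof -
  have Am_relint: "Am \<subseteq> rel_interior (convex hull Ap)"
    using assms(2) unfolding nonseparable_def by blast
  then have "convex hull (Ap \<union> Am) \<subseteq> convex hull Ap"
    using rel_interior_subset hull_subset[of Ap convex]
    by (intro hull_minimal) auto
  then have "aff_dim (convex hull (Ap \<union> Am)) \<le> aff_dim (convex hull Ap)"
    by (rule aff_dim_subset)
  then have "aff_dim (convex hull Ap) = int DIM(real^'n)"
    using assms(1) aff_dim_le_DIM[of "convex hull Ap"] unfolding full_dimensional_def by simp
  then have "affine hull (convex hull Ap) = UNIV"
    using aff_dim_eq_full by blast
  then show ?thesis
    using Am_relint rel_interior_interior by blast
qed

lemma balanced_weights_quadratic_pos:
  fixes Ap Am :: "(real^'n) set" and K :: "real^'n \<Rightarrow> real" and u :: "real^'n"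
  assumes "finite Ap" "finite Am" "Am \<noteq> {}"
    and K_pos: "\<forall>a\<in>Ap \<union> Am. K a > 0"
    and mass: "sum K Ap = sum K Am"
    and moment: "(\<Sum>a\<in>Ap. K a *\<^sub>R a) = (\<Sum>b\<in>Am. K b *\<^sub>R b)"
    and interior: "Am \<subseteq> interior (convex hull Ap)" and "nonseparable Ap Am" and "u \<noteq> 0"
  shows "(\<Sum>a\<in>Ap. K a * (u \<bullet> a)\<^sup>2) - (\<Sum>b\<in>Am. K b * (u \<bullet> b)\<^sup>2) > 0"
proof -
  obtain v \<kappa> where Ap_ge: "\<forall>a\<in>Ap. \<kappa> \<le> (u \<bullet> a)\<^sup>2 + v \<bullet> a"
    and Am_le: "\<forall>b\<in>Am. (u \<bullet> b)\<^sup>2 + v \<bullet> b \<le> \<kappa>"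
    using nonseparable_supporting_quadric[OF \<open>nonseparable Ap Am\<close>] .
  define \<phi> where "\<phi> y = (u \<bullet> y)\<^sup>2 + v \<bullet> y" for y
  define S where "S = (\<Sum>a\<in>Ap. K a * (\<phi> a - \<kappa>))"
  define T where "T = (\<Sum>b\<in>Am. K b * (\<kappa> - \<phi> b))"
  have S_terms: "\<forall>a\<in>Ap. K a * (\<phi> a - \<kappa>) \<ge> 0" and T_terms: "\<forall>b\<in>Am. K b * (\<kappa> - \<phi> b) \<ge> 0"
    using Ap_ge Am_le K_pos by (auto simp: \<phi>_def less_imp_le)
  have linear_part: "(\<Sum>a\<in>Ap. K a * (v \<bullet> a)) = (\<Sum>b\<in>Am. K b * (v \<bullet> b))"
    using arg_cong[OF moment, of "inner v"] by (simp add: inner_sum_right)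
  have "S = (\<Sum>a\<in>Ap. K a * (u \<bullet> a)\<^sup>2) + (\<Sum>a\<in>Ap. K a * (v \<bullet> a)) - \<kappa> * sum K Ap"
    unfolding S_def \<phi>_def by (simp add: algebra_simps sum.distrib sum_subtractf sum_distrib_left)
  moreover have "T = \<kappa> * sum K Am - (\<Sum>b\<in>Am. K b * (u \<bullet> b)\<^sup>2) - (\<Sum>b\<in>Am. K b * (v \<bullet> b))"
    unfolding T_def \<phi>_def by (simp add: algebra_simps sum.distrib sum_subtractf sum_distrib_left)
  ultimately have decomposition: "(\<Sum>a\<in>Ap. K a * (u \<bullet> a)\<^sup>2) - (\<Sum>b\<in>Am. K b * (u \<bullet> b)\<^sup>2) = S + T"
    using mass linear_part by simp
  have "S \<ge> 0" "T \<ge> 0"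
    using S_terms T_terms by (simp_all add: S_def T_def sum_nonneg)
  moreover have "S + T \<noteq> 0"
  proof
    assume "S + T = 0"
    with \<open>S \<ge> 0\<close> \<open>T \<ge> 0\<close> have "S = 0" "T = 0"
      by linarith+
    then have "\<forall>a\<in>Ap. K a * (\<phi> a - \<kappa>) = 0" "\<forall>b\<in>Am. K b * (\<kappa> - \<phi> b) = 0"
      using S_terms T_terms \<open>finite Ap\<close> \<open>finite Am\<close> by (simp_all add: S_def T_def sum_nonneg_eq_0_iff)
    then have on_Ap: "\<forall>a\<in>Ap. \<phi> a = \<kappa>" and on_Am: "\<forall>b\<in>Am. \<phi> b = \<kappa>"
      using K_pos by (metis UnI1 less_irrefl mult_eq_0_iff right_minus_eq,
          metis UnI2 less_irrefl mult_eq_0_iff right_minus_eq)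
    obtain b where "b \<in> Am"
      using \<open>Am \<noteq> {}\<close> by blast
    have "convex_on (convex hull Ap) \<phi>"
      unfolding \<phi>_def by (intro convex_on_inner_square_plus_linear convex_convex_hull)
    then have "\<forall>y\<in>convex hull Ap. \<phi> y \<le> \<phi> b"
      using convex_on_convex_hull_bound on_Ap on_Am \<open>b \<in> Am\<close> by fastforce
    then have "u = 0"
      using inner_square_plus_linear_no_interior_max interior \<open>b \<in> Am\<close> unfolding \<phi>_def by blast
    with \<open>u \<noteq> 0\<close> show False ..
  qed
  ultimately show ?thesis
    using decomposition by linarith
qed

section \<open>Derivatives of signomials\<close>

definition vec_upd :: "real^'m \<Rightarrow> 'm \<Rightarrow> real \<Rightarrow> real^'m" where
  "vec_upd x i s = (\<chi> j. if j = i then s else x $ j)"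

lemma vec_upd_nth [simp]: "vec_upd x i s $ j = (if j = i then s else x $ j)"
  by (simp add: vec_upd_def)

lemma vec_upd_same [simp]: "vec_upd x i (x $ i) = x"
  by (simp add: vec_eq_iff)

lemma partial_eqI:
  assumes "((\<lambda>s. f (vec_upd x i s)) has_real_derivative D) (at (x $ i))"
  shows "partial f i x = D"
  unfolding partial_def vec_upd_def[symmetric] using assms by (rule DERIV_imp_deriv)

lemma monom_pos: "(\<And>i. x $ i > 0) \<Longrightarrow> monom x a > 0"
  unfolding monom_def by (intro prod_pos) (metis less_irrefl powr_gt_zero)

lemma monom_has_real_derivative_coord:
  assumes "x $ j > 0"
  shows "((\<lambda>s. monom (vec_upd x j s) a) has_real_derivative a $ j * monom x a / x $ j) (at (x $ j))"
proof -
  define R where "R = (\<Prod>k\<in>UNIV - {j}. x $ k powr a $ k)"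
  have factor: "monom (vec_upd x j s) a = s powr (a $ j) * R" for s
  proof -
    have "(\<Prod>k\<in>UNIV - {j}. vec_upd x j s $ k powr a $ k) = R"
      unfolding R_def by (intro prod.cong) auto
    then show ?thesis
      unfolding monom_def by (simp add: prod.remove[of UNIV j])
  qed
  have "((\<lambda>s. s powr (a $ j) * R) has_real_derivative a $ j * x $ j powr (a $ j - 1) * R) (at (x $ j))"
    by (intro DERIV_cmult_right has_real_derivative_powr assms)
  moreover have "a $ j * x $ j powr (a $ j - 1) * R = a $ j * monom x a / x $ j"
    using factor[of "x $ j"] assms by (simp add: powr_diff)
  ultimately show ?thesis
    unfolding factor by simp
qed

lemma fsig_has_real_derivative_coord:
  assumes "finite Ap" "finite Am" "x $ j > 0"
  shows "((\<lambda>s. fsig Ap Am c (vec_upd x j s)) has_real_derivative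
           fsig Ap Am (\<lambda>a. c a * a $ j) x / x $ j) (at (x $ j))"
proof -
  have "((\<lambda>s. fsig Ap Am c (vec_upd x j s)) has_real_derivative
      (\<Sum>a\<in>Ap. c a * (a $ j * monom x a / x $ j)) - (\<Sum>a\<in>Am. c a * (a $ j * monom x a / x $ j)))
      (at (x $ j))"
    unfolding fsig_def by (intro DERIV_diff DERIV_sum DERIV_cmult monom_has_real_derivative_coord assms)
  then show ?thesis
    by (simp add: fsig_def sum_divide_distrib diff_divide_distrib mult.assoc)
qed

lemma partial_fsig:
  assumes "finite Ap" "finite Am" "x $ j > 0"
  shows "partial (fsig Ap Am c) j x = fsig Ap Am (\<lambda>a. c a * a $ j) x / x $ j"
  using fsig_has_real_derivative_coord[OF assms] by (rule partial_eqI)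

lemma crit_sys_Some:
  assumes "finite Ap" "finite Am" "x $ i > 0"
  shows "crit_sys Ap Am c x $ Some i = fsig Ap Am (\<lambda>a. c a * a $ i) x"
  using assms by (simp add: crit_sys_def partial_fsig)

lemma fsig_zero_imp_negative_terms:
  assumes "finite Ap" "Ap \<union> Am \<noteq> {}" "\<forall>a\<in>Ap. c a > 0" "\<And>i. x $ i > 0" "fsig Ap Am c x = 0"
  shows "Am \<noteq> {}"
proof
  assume "Am = {}"
  then have "Ap \<noteq> {}"
    using assms(2) by simp
  then have "(\<Sum>a\<in>Ap. c a * monom x a) > 0"
    using assms(1,3,4) by (intro sum_pos) (auto intro!: mult_pos_pos monom_pos)
  with assms(5) \<open>Am = {}\<close> show False
    by (simp add: fsig_def)
qed

lemma fsig_neg_if_no_positive_terms: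
  assumes "finite Am" "Am \<noteq> {}" "\<forall>a\<in>Ap. c a = 0" "\<forall>b\<in>Am. c b > 0" "\<And>i. x $ i > 0"
  shows "fsig Ap Am c x < 0"
  using assms by (auto simp: fsig_def intro!: sum_pos mult_pos_pos monom_pos)

lemma fsig_inner_coeffs:
  "fsig Ap Am (\<lambda>a. c a * (a \<bullet> w)) x = (\<Sum>j\<in>UNIV. w $ j * fsig Ap Am (\<lambda>a. c a * a $ j) x)"
  by (simp add: fsig_def inner_vec_def right_diff_distrib sum_distrib_left sum_distrib_right
      sum_subtractf sum.swap[of _ UNIV] mult_ac)

lemma critical_point_log_hessian_pos:
  fixes Ap Am :: "(real^'n) set" and c :: "real^'n \<Rightarrow> real" and x u :: "real^'n"
  assumes "finite Ap" "finite Am" "Am \<noteq> {}"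
    and c_pos: "\<forall>a\<in>Ap \<union> Am. c a > 0" and x_pos: "\<And>i. x $ i > 0"
    and crit: "fsig Ap Am c x = 0" "\<And>i. fsig Ap Am (\<lambda>a. c a * a $ i) x = 0"
    and "Am \<subseteq> interior (convex hull Ap)" "nonseparable Ap Am" "u \<noteq> 0"
  shows "fsig Ap Am (\<lambda>a. c a * (u \<bullet> a)\<^sup>2) x > 0"
proof -
  define K where "K a = c a * monom x a" for a
  have "\<forall>a\<in>Ap \<union> Am. K a > 0"
    using c_pos x_pos by (auto simp: K_def intro!: mult_pos_pos monom_pos)
  moreover have "sum K Ap = sum K Am"
    using crit(1) by (simp add: fsig_def K_def)
  moreover have "(\<Sum>a\<in>Ap. K a *\<^sub>R a) = (\<Sum>b\<in>Am. K b *\<^sub>R b)"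
    using crit(2) by (simp add: vec_eq_iff fsig_def K_def mult_ac)
  ultimately have "(\<Sum>a\<in>Ap. K a * (u \<bullet> a)\<^sup>2) - (\<Sum>b\<in>Am. K b * (u \<bullet> b)\<^sup>2) > 0"
    using balanced_weights_quadratic_pos assms by blast
  then show ?thesis
    by (simp add: fsig_def K_def mult_ac)
qed

lemma log_hessian_scaled_injective:
  fixes c :: "real^'n \<Rightarrow> real" and x v :: "real^'n"
  assumes x_pos: "\<And>j. x $ j > 0"
    and definite: "\<And>w. w \<noteq> 0 \<Longrightarrow> fsig Ap Am (\<lambda>a. c a * (w \<bullet> a)\<^sup>2) x \<noteq> 0"
    and kernel: "(\<chi> i. \<Sum>j\<in>UNIV. fsig Ap Am (\<lambda>a. c a * a $ i * a $ j) x / x $ j * v $ j) = 0"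
  shows "v = 0"
proof -
  define w where "w = (\<chi> j. v $ j / x $ j)"
  have row: "fsig Ap Am (\<lambda>a. c a * a $ i * (a \<bullet> w)) x = 0" for i
  proof -
    have "fsig Ap Am (\<lambda>a. c a * a $ i * (a \<bullet> w)) x
        = (\<Sum>j\<in>UNIV. fsig Ap Am (\<lambda>a. c a * a $ i * a $ j) x / x $ j * v $ j)"
      unfolding fsig_inner_coeffs by (simp add: w_def mult_ac)
    also have "\<dots> = 0"
      using kernel by (simp add: vec_eq_iff)
    finally show ?thesis .
  qed
  have "fsig Ap Am (\<lambda>a. c a * (w \<bullet> a)\<^sup>2) x = fsig Ap Am (\<lambda>a. c a * (a \<bullet> w) * (a \<bullet> w)) x"
    by (simp add: power2_eq_square inner_commute mult.assoc)
  also have "\<dots> = (\<Sum>i\<in>UNIV. w $ i * fsig Ap Am (\<lambda>a. c a * (a \<bullet> w) * a $ i) x)"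
    by (rule fsig_inner_coeffs)
  also have "\<dots> = 0"
    using row by (simp add: mult.assoc mult.commute[of "_ $ _" "_ \<bullet> _"])
  finally have "w = 0"
    using definite by blast
  then show "v = 0"
    using x_pos by (simp add: w_def vec_eq_iff) (metis less_irrefl)
qed

section \<open>The Jacobian of the lifted critical system\<close>

definition lifted_coeffs :: "(real^'n \<Rightarrow> real) \<Rightarrow> (real^'n \<Rightarrow> int) \<Rightarrow> real \<Rightarrow> real^'n \<Rightarrow> real" where
  "lifted_coeffs c h t = (\<lambda>a. c a * t powi h a)"

definition xcoords :: "real^('n option) \<Rightarrow> real^'n" where
  "xcoords p = (\<chi> i. p $ Some i)"

lemma xcoords_nth [simp]: "xcoords p $ i = p $ Some i"
  by (simp add: xcoords_def)

lemma xcoords_vec_upd_Some [simp]: "xcoords (vec_upd p (Some j) s) = vec_upd (xcoords p) j s"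
  by (simp add: vec_eq_iff)

lemma xcoords_vec_upd_None [simp]: "xcoords (vec_upd p None s) = xcoords p"
  by (simp add: vec_eq_iff)

lemma Gsys_None: "Gsys Ap Am c h p $ None = fsig Ap Am (lifted_coeffs c h (p $ None)) (xcoords p)"
  by (simp add: Gsys_def crit_sys_def lifted_coeffs_def xcoords_def)

lemma Gsys_Some:
  assumes "finite Ap" "finite Am" "p $ Some i > 0"
  shows "Gsys Ap Am c h p $ Some i = fsig Ap Am (\<lambda>a. lifted_coeffs c h (p $ None) a * a $ i) (xcoords p)"
  using crit_sys_Some[of Ap Am "xcoords p"] assms
  by (simp add: Gsys_def lifted_coeffs_def xcoords_def)

lemma jacobian_Gsys_None_Some:
  assumes "finite Ap" "finite Am" "p $ Some j > 0"
  shows "jacobian_mat (Gsys Ap Am c h) p $ None $ Some j = Gsys Ap Am c h p $ Some j / p $ Some j"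
proof -
  have "partial (\<lambda>q. Gsys Ap Am c h q $ None) (Some j) p = Gsys Ap Am c h p $ Some j / p $ Some j"
    using fsig_has_real_derivative_coord[of Ap Am "xcoords p" j "lifted_coeffs c h (p $ None)"] assms
    by (intro partial_eqI) (simp add: Gsys_None Gsys_Some)
  then show ?thesis
    by (simp add: jacobian_mat_def)
qed

lemma jacobian_Gsys_Some_Some:
  assumes "finite Ap" "finite Am" "\<And>i. p $ Some i > 0"
  shows "jacobian_mat (Gsys Ap Am c h) p $ Some i $ Some j
    = fsig Ap Am (\<lambda>a. lifted_coeffs c h (p $ None) a * a $ i * a $ j) (xcoords p) / p $ Some j"
proof -
  define C where "C = (\<lambda>a. lifted_coeffs c h (p $ None) a * a $ i)"
  have "\<forall>\<^sub>F s in nhds (p $ Some j). s \<in> {0<..}"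
    using assms(3) by (intro eventually_nhds_in_open) auto
  then have "\<forall>\<^sub>F s in nhds (p $ Some j).
      Gsys Ap Am c h (vec_upd p (Some j) s) $ Some i = fsig Ap Am C (vec_upd (xcoords p) j s)"
    by eventually_elim (use assms in \<open>simp add: Gsys_Some C_def\<close>)
  moreover have "((\<lambda>s. fsig Ap Am C (vec_upd (xcoords p) j s)) has_real_derivative
      fsig Ap Am (\<lambda>a. C a * a $ j) (xcoords p) / p $ Some j) (at (p $ Some j))"
    using fsig_has_real_derivative_coord[of Ap Am "xcoords p" j C] assms by simp
  ultimately have "partial (\<lambda>q. Gsys Ap Am c h q $ Some i) (Some j) p
      = fsig Ap Am (\<lambda>a. C a * a $ j) (xcoords p) / p $ Some j"
    by (intro partial_eqI) (simp add: DERIV_cong_ev)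
  then show ?thesis
    by (simp add: jacobian_mat_def C_def)
qed

lemma jacobian_Gsys_None_None:
  assumes "finite Ap" "finite Am" "p $ None \<noteq> 0"
  shows "jacobian_mat (Gsys Ap Am c h) p $ None $ None
    = fsig Ap Am (\<lambda>a. c a * of_int (h a) * p $ None powi (h a - 1)) (xcoords p)"
proof -
  have "((\<lambda>t. fsig Ap Am (lifted_coeffs c h t) (xcoords p)) has_real_derivative
      fsig Ap Am (\<lambda>a. c a * of_int (h a) * p $ None powi (h a - 1)) (xcoords p)) (at (p $ None))"
    unfolding fsig_def lifted_coeffs_def using assms
    by (auto intro!: derivative_eq_intros simp: sum_distrib_left mult_ac)
  then show ?thesis
    by (simp add: jacobian_mat_def Gsys_None partial_eqI)
qed

lemma jacobian_Gsys_None_None_neg: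
  assumes "finite Ap" "finite Am" "Am \<noteq> {}" "lifts Ap Am h" "\<forall>a\<in>Ap \<union> Am. c a > 0"
    and "\<forall>k. p $ k > 0"
  shows "jacobian_mat (Gsys Ap Am c h) p $ None $ None < 0"
proof -
  have "fsig Ap Am (\<lambda>a. c a * of_int (h a) * p $ None powi (h a - 1)) (xcoords p) < 0"
    using assms by (intro fsig_neg_if_no_positive_terms) (auto simp: lifts_def)
  moreover have "p $ None \<noteq> 0"
    using assms(6) by (metis less_irrefl)
  ultimately show ?thesis
    using jacobian_Gsys_None_None[OF assms(1,2)] by simp
qed

theorem proposition4p4:
  fixes Ap Am :: "(real^'n) set" and c :: "real^'n \<Rightarrow> real" and h :: "real^'n \<Rightarrow> int"
    and p :: "real^('n option)"
  assumes "finite Ap" and "finite Am" and "Ap \<inter> Am = {}"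
    and "int_points Ap" and "int_points Am"
    and "full_dimensional Ap Am" and "nonseparable Ap Am"
    and "\<forall>a\<in>Ap \<union> Am. c a > 0"
    and "lifts Ap Am h"
    and "\<forall>k. p $ k > 0"
    and "Gsys Ap Am c h p = 0"
  shows "det (jacobian_mat (Gsys Ap Am c h) p) \<noteq> 0"
proof -
  define C where "C = lifted_coeffs c h (p $ None)"
  have fin: "finite Ap" "finite Am" and x_pos: "\<And>i. xcoords p $ i > 0"
    using assms(1,2,10) by auto
  have C_pos: "\<forall>a\<in>Ap \<union> Am. C a > 0"
    using assms(8,10) by (simp add: C_def lifted_coeffs_def)
  have crit: "fsig Ap Am C (xcoords p) = 0" "fsig Ap Am (\<lambda>a. C a * a $ i) (xcoords p) = 0" for i
    using Gsys_None[of Ap Am c h p] Gsys_Some[OF fin, of p i c h] assms(10,11) by (simp_all add: C_def)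
  have "Am \<noteq> {}"
    using C_pos assms(6) by (intro fsig_zero_imp_negative_terms[OF fin(1) _ _ x_pos crit(1)])
      (auto simp: full_dimensional_def)
  have hessian: "fsig Ap Am (\<lambda>a. C a * (w \<bullet> a)\<^sup>2) (xcoords p) \<noteq> 0" if "w \<noteq> 0" for w
    using critical_point_log_hessian_pos[OF fin \<open>Am \<noteq> {}\<close> C_pos x_pos crit
        nonseparable_full_dimensional_interior[OF assms(6,7)] assms(7) that] by simp
  show ?thesis
  proof (rule det_bordered_nonzero)
    show "jacobian_mat (Gsys Ap Am c h) p $ None $ Some j = 0" for j
      using jacobian_Gsys_None_Some[OF fin, of p j c h] assms(10,11) by simp
    show "jacobian_mat (Gsys Ap Am c h) p $ None $ None \<noteq> 0"
      using jacobian_Gsys_None_None_neg[OF fin \<open>Am \<noteq> {}\<close> assms(9,8,10)] by simp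
    show "w = 0" if "(\<chi> i. \<Sum>j\<in>UNIV. jacobian_mat (Gsys Ap Am c h) p $ Some i $ Some j * w $ j) = 0" for w
      using log_hessian_scaled_injective[OF x_pos hessian] that
      by (simp add: jacobian_Gsys_Some_Some[OF fin] assms(10) C_def)
  qed
qed

end
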